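(* Let $0<\underline b\le\bar b<\infty$ and $0<\underline\theta\le\bar\theta<\infty$. There exists a constant $C>0$ depending only on $\nu,\underline b,\bar b,\underline\theta,\bar\theta$ such that for all $\delta\in(0,1]$, $b\in[\underline b,\bar b]$, $\theta\in[\underline\theta,\bar\theta]$ and $\lambda\in[-\pi,\pi]$: $$a^*_{b,\delta\theta}(\lambda)\le a^\delta_{b,\theta}(\lambda)\le a^*_{b,\delta\theta}(\lambda)+C\delta^{2\nu},\qquad a^\delta_{b,\theta}(\lambda)\le C\,g^*_{\nu,\delta\theta}(\lambda).$$
   Context: Fix $\nu\ge1/2$. For $\alpha>0$, $\omega\in\mathbb R$ let $g^*_{\nu,\alpha}(\omega)=C_\nu\alpha^{2\nu}(\alpha^2+\omega^2)^{-(\nu+1/2)}$ with $C_\nu=\Gamma(\nu+\frac12)/(\sqrt\pi\,\Gamma(\nu))$. For $\delta,\theta>0$ and $\lambda\in[-\pi,\pi]$ let $g^\delta_{\nu,\theta}(\lambda)=\sum_{k\in\mathbb Z}g^*_{\nu,\delta\theta}(\lambda+2k\pi)$. For $b>0$: $a^\delta_{b,\theta}=\dfrac{b\,g^\delta_{\nu,\theta}}{b\,g^\delta_{\nu,\theta}+(2\pi)^{-1}}$ and $a^*_{b,\alpha}=\dfrac{b\,g^*_{\nu,\alpha}}{b\,g^*_{\nu,\alpha}+(2\pi)^{-1}}$. *)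

theory Defs
  imports "HOL-Analysis.Analysis"
begin

definition C_nu :: "real \<Rightarrow> real" where
  "C_nu \<nu> = Gamma (\<nu> + 1/2) / (sqrt pi * Gamma \<nu>)"

definition g_star :: "real \<Rightarrow> real \<Rightarrow> real \<Rightarrow> real" where
  "g_star \<nu> \<alpha> \<omega> = C_nu \<nu> * \<alpha> powr (2*\<nu>) * (\<alpha>\<^sup>2 + \<omega>\<^sup>2) powr (-(\<nu> + 1/2))"

definition g_delta :: "real \<Rightarrow> real \<Rightarrow> real \<Rightarrow> real \<Rightarrow> real" where
  "g_delta \<nu> \<delta> \<theta> lam = infsum (\<lambda>k::int. g_star \<nu> (\<delta>*\<theta>) (lam + 2 * of_int k * pi)) UNIV"

definition a_delta :: "real \<Rightarrow> real \<Rightarrow> real \<Rightarrow> real \<Rightarrow> real \<Rightarrow> real" where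
  "a_delta \<nu> \<delta> b \<theta> lam = b * g_delta \<nu> \<delta> \<theta> lam / (b * g_delta \<nu> \<delta> \<theta> lam + 1 / (2*pi))"

definition a_star :: "real \<Rightarrow> real \<Rightarrow> real \<Rightarrow> real \<Rightarrow> real" where
  "a_star \<nu> b \<alpha> \<omega> = b * g_star \<nu> \<alpha> \<omega> / (b * g_star \<nu> \<alpha> \<omega> + 1 / (2*pi))"

end

theory Submission
  imports Defs
begin

text \<open>Splitting off the term \<open>k = 0\<close> gives \<open>g\<^sup>\<delta>(\<lambda>) = g\<^sup>*(\<lambda>) + R\<close> with
  \<open>R = \<Sum>\<^bsub>k \<noteq> 0\<^esub> g\<^sup>*(\<lambda> + 2k\<pi>)\<close>. For \<open>|\<lambda>| \<le> \<pi>\<close> and \<open>k \<noteq> 0\<close> we have \<open>|\<lambda> + 2k\<pi>| \<ge> |k|\<close>, and since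
  \<open>\<nu> + 1/2 \<ge> 1\<close> each term of \<open>R\<close> is at most \<open>C\<^sub>\<nu> (\<delta>\<theta>)\<^bsup>2\<nu>\<^esup> / k\<^sup>2\<close>. Hence \<open>R = O(\<delta>\<^bsup>2\<nu>\<^esup>)\<close>, and
  also \<open>R = O(g\<^sup>*(\<lambda>))\<close> because \<open>C\<^sub>\<nu> (\<delta>\<theta>)\<^bsup>2\<nu>\<^esup> = g\<^sup>*(\<lambda>) ((\<delta>\<theta>)\<^sup>2 + \<lambda>\<^sup>2)\<^bsup>\<nu>+1/2\<^esup>\<close> with a bounded
  second factor. The map \<open>t \<mapsto> t / (t + c)\<close> is increasing, \<open>1/c\<close>-Lipschitz on \<open>[0, \<infinity>)\<close> and bounded
  by \<open>t / c\<close>, which turns these estimates for \<open>g\<^sup>\<delta>\<close> into the bounds for \<open>a\<^sup>\<delta>\<close>.\<close>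

lemma summable_on_inverse_int_square: "(\<lambda>k::int. inverse (of_int k ^ 2) :: real) summable_on UNIV"
proof -
  have nat: "(\<lambda>n::nat. inverse (real n ^ 2)) summable_on UNIV"
    by (rule summable_nonneg_imp_summable_on[OF inverse_power_summable]) auto
  have "(\<lambda>k::int. inverse (of_int k ^ 2) :: real) summable_on range int \<union> range (\<lambda>n. - int n)"
    using nat by (intro summable_on_union) (subst summable_on_reindex; simp add: o_def inj_on_def)+
  moreover have "range int \<union> range (\<lambda>n. - int n) = UNIV"
  proof (rule set_eqI)
    fix k :: int
    show "k \<in> range int \<union> range (\<lambda>n. - int n) \<longleftrightarrow> k \<in> UNIV"
      by (cases k rule: int_cases2) auto
  qed
  ultimately show ?thesis by simp
qed

definition inverse_square_sum :: real where
  "inverse_square_sum = (\<Sum>\<^sub>\<infinity>k\<in>-{0::int}. inverse (of_int k ^ 2))"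

lemma inverse_square_sum_nonneg: "0 \<le> inverse_square_sum"
  unfolding inverse_square_sum_def by (intro infsum_nonneg) simp

lemma abs_shift_ge:
  fixes k :: int and lam :: real
  assumes "k \<noteq> 0" "\<bar>lam\<bar> \<le> pi"
  shows "\<bar>of_int k\<bar> \<le> \<bar>lam + 2 * of_int k * pi\<bar>"
proof -
  have k: "1 \<le> \<bar>real_of_int k\<bar>" using assms(1) by linarith
  have "\<bar>real_of_int k\<bar> * 1 \<le> \<bar>real_of_int k\<bar> * pi" "1 * pi \<le> \<bar>real_of_int k\<bar> * pi"
    using k pi_gt3 by (intro mult_left_mono mult_right_mono; simp)+
  moreover have "\<bar>2 * of_int k * pi\<bar> = 2 * (\<bar>real_of_int k\<bar> * pi)" by (simp add: abs_mult)
  ultimately show ?thesis using assms(2) by linarith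
qed

lemma C_nu_pos: "0 < \<nu> \<Longrightarrow> 0 < C_nu \<nu>"
  unfolding C_nu_def by (intro divide_pos_pos mult_pos_pos Gamma_real_pos) auto

lemma g_star_nonneg: "0 < \<nu> \<Longrightarrow> 0 \<le> g_star \<nu> \<alpha> \<omega>"
  unfolding g_star_def using C_nu_pos[of \<nu>] by simp

lemma C_nu_mult_powr_eq:
  assumes "0 < \<alpha>"
  shows "C_nu \<nu> * \<alpha> powr (2*\<nu>) = g_star \<nu> \<alpha> \<omega> * (\<alpha>\<^sup>2 + \<omega>\<^sup>2) powr (\<nu> + 1/2)"
proof -
  have "0 < \<alpha>\<^sup>2 + \<omega>\<^sup>2" using assms by (simp add: add_pos_nonneg)
  then have "(\<alpha>\<^sup>2 + \<omega>\<^sup>2) powr (-(\<nu> + 1/2)) * (\<alpha>\<^sup>2 + \<omega>\<^sup>2) powr (\<nu> + 1/2) = 1"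
    using assms by (simp add: powr_add[symmetric])
  then show ?thesis unfolding g_star_def using assms by (auto simp: mult.assoc)
qed

lemma g_star_shift_le:
  fixes k :: int
  assumes "k \<noteq> 0" "\<bar>lam\<bar> \<le> pi" "0 < \<alpha>" "1/2 \<le> \<nu>"
  shows "g_star \<nu> \<alpha> (lam + 2 * of_int k * pi) \<le> C_nu \<nu> * \<alpha> powr (2*\<nu>) * inverse (of_int k ^ 2)"
proof -
  define q where "q = \<alpha>\<^sup>2 + (lam + 2 * of_int k * pi)\<^sup>2"
  have "1 \<le> \<bar>real_of_int k\<bar>" using assms(1) by linarith
  then have k: "1 \<le> real_of_int k ^ 2" by (metis abs_le_square_iff abs_one one_power2)
  have "of_int k ^ 2 \<le> (lam + 2 * of_int k * pi)\<^sup>2"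
    using abs_shift_ge[OF assms(1,2)] by (simp add: abs_le_square_iff)
  then have qk: "of_int k ^ 2 \<le> q" unfolding q_def using zero_le_power2[of \<alpha>] by linarith
  have "q powr (-(\<nu> + 1/2)) \<le> q powr (-1)"
    using qk k assms(4) by (intro powr_mono) auto
  also have "\<dots> \<le> inverse (of_int k ^ 2)"
    using qk k by (auto simp: powr_minus intro!: le_imp_inverse_le)
  finally show ?thesis
    unfolding g_star_def q_def[symmetric] using C_nu_pos[of \<nu>] assms(4) by (intro mult_left_mono) auto
qed

lemma g_star_shift_summable:
  assumes "\<bar>lam\<bar> \<le> pi" "0 < \<alpha>" "1/2 \<le> \<nu>"
  shows "(\<lambda>k::int. g_star \<nu> \<alpha> (lam + 2 * of_int k * pi)) summable_on -{0}"
proof (rule summable_on_comparison_test)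
  show "(\<lambda>k::int. C_nu \<nu> * \<alpha> powr (2*\<nu>) * inverse (of_int k ^ 2)) summable_on -{0}"
    using summable_on_inverse_int_square summable_on_subset_banach
    by (intro summable_on_cmult_right) blast
qed (use assms g_star_shift_le g_star_nonneg in auto)

definition g_tail :: "real \<Rightarrow> real \<Rightarrow> real \<Rightarrow> real" where
  "g_tail \<nu> \<alpha> lam = (\<Sum>\<^sub>\<infinity>k\<in>-{0}. g_star \<nu> \<alpha> (lam + 2 * of_int k * pi))"

lemma g_delta_eq_g_star_plus_g_tail:
  assumes "\<bar>lam\<bar> \<le> pi" "0 < \<delta> * \<theta>" "1/2 \<le> \<nu>"
  shows "g_delta \<nu> \<delta> \<theta> lam = g_star \<nu> (\<delta> * \<theta>) lam + g_tail \<nu> (\<delta> * \<theta>) lam"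
proof -
  have "(UNIV :: int set) = insert 0 (-{0})" by auto
  then show ?thesis
    unfolding g_delta_def g_tail_def
    using infsum_insert[OF g_star_shift_summable[OF assms], of 0] by simp
qed

lemma g_tail_nonneg: "0 < \<nu> \<Longrightarrow> 0 \<le> g_tail \<nu> \<alpha> lam"
  unfolding g_tail_def by (intro infsum_nonneg g_star_nonneg)

lemma g_tail_le:
  assumes "\<bar>lam\<bar> \<le> pi" "0 < \<alpha>" "1/2 \<le> \<nu>"
  shows "g_tail \<nu> \<alpha> lam \<le> C_nu \<nu> * \<alpha> powr (2*\<nu>) * inverse_square_sum"
proof -
  have "(\<lambda>k::int. inverse (of_int k ^ 2) :: real) summable_on -{0}"
    using summable_on_inverse_int_square summable_on_subset_banach by blast
  then show ?thesis
    unfolding g_tail_def inverse_square_sum_def infsum_cmult_right'[symmetric]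
    using assms g_star_shift_le
    by (intro infsum_mono g_star_shift_summable summable_on_cmult_right) auto
qed

lemma divide_add_const_mono:
  fixes s t c :: real
  assumes "0 \<le> s" "s \<le> t" "0 < c"
  shows "s / (s + c) \<le> t / (t + c)"
proof -
  have "s * (t + c) \<le> t * (s + c)" using assms by (simp add: algebra_simps mult_right_mono)
  then show ?thesis using assms by (simp add: divide_simps)
qed

lemma divide_add_const_diff_le:
  fixes s t c :: real
  assumes "0 \<le> s" "s \<le> t" "0 < c"
  shows "t / (t + c) - s / (s + c) \<le> (t - s) / c"
proof -
  have "t / (t + c) - s / (s + c) = c * (t - s) / ((t + c) * (s + c))"
    using assms by (simp add: field_simps)
  also have "\<dots> \<le> c * (t - s) / (c * c)"
    using assms by (intro divide_left_mono mult_mono) auto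
  finally show ?thesis using assms by simp
qed

lemma divide_add_const_le:
  fixes t c :: real
  assumes "0 \<le> t" "0 < c"
  shows "t / (t + c) \<le> t / c"
  using assms by (intro divide_left_mono) auto

lemma a_delta_bounds:
  assumes "\<bar>lam\<bar> \<le> pi" "0 < \<delta> * \<theta>" "1/2 \<le> \<nu>" "0 < b"
  shows "a_star \<nu> b (\<delta>*\<theta>) lam \<le> a_delta \<nu> \<delta> b \<theta> lam"
    and "a_delta \<nu> \<delta> b \<theta> lam \<le> a_star \<nu> b (\<delta>*\<theta>) lam + 2*pi*b * g_tail \<nu> (\<delta>*\<theta>) lam"
    and "a_delta \<nu> \<delta> b \<theta> lam \<le> 2*pi*b * (g_star \<nu> (\<delta>*\<theta>) lam + g_tail \<nu> (\<delta>*\<theta>) lam)"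
proof -
  define s where "s = b * g_star \<nu> (\<delta>*\<theta>) lam"
  define t where "t = b * (g_star \<nu> (\<delta>*\<theta>) lam + g_tail \<nu> (\<delta>*\<theta>) lam)"
  have st: "0 \<le> s" "s \<le> t"
    unfolding s_def t_def using assms g_star_nonneg g_tail_nonneg by (simp_all add: distrib_left)
  have c: "0 < 1 / (2*pi)" by simp
  have a_star: "a_star \<nu> b (\<delta>*\<theta>) lam = s / (s + 1 / (2*pi))"
    unfolding a_star_def s_def ..
  have a_delta: "a_delta \<nu> \<delta> b \<theta> lam = t / (t + 1 / (2*pi))"
    unfolding a_delta_def t_def g_delta_eq_g_star_plus_g_tail[OF assms(1-3)] ..
  show "a_star \<nu> b (\<delta>*\<theta>) lam \<le> a_delta \<nu> \<delta> b \<theta> lam"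
    unfolding a_star a_delta using divide_add_const_mono[OF st c] .
  show "a_delta \<nu> \<delta> b \<theta> lam \<le> a_star \<nu> b (\<delta>*\<theta>) lam + 2*pi*b * g_tail \<nu> (\<delta>*\<theta>) lam"
    unfolding a_star a_delta using divide_add_const_diff_le[OF st c]
    by (simp add: s_def t_def algebra_simps)
  show "a_delta \<nu> \<delta> b \<theta> lam \<le> 2*pi*b * (g_star \<nu> (\<delta>*\<theta>) lam + g_tail \<nu> (\<delta>*\<theta>) lam)"
    unfolding a_delta using divide_add_const_le[OF order_trans[OF st] c]
    by (simp add: t_def mult_ac)
qed

lemma g_tail_le_delta_powr:
  assumes "\<bar>lam\<bar> \<le> pi" "0 < \<delta>" "0 < \<theta>" "\<theta> \<le> \<Theta>" "1/2 \<le> \<nu>"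
  shows "g_tail \<nu> (\<delta>*\<theta>) lam \<le> C_nu \<nu> * \<Theta> powr (2*\<nu>) * inverse_square_sum * \<delta> powr (2*\<nu>)"
proof -
  have "(\<delta>*\<theta>) powr (2*\<nu>) \<le> \<Theta> powr (2*\<nu>) * \<delta> powr (2*\<nu>)"
    using assms by (simp add: powr_mult mult_right_mono powr_mono2)
  have "g_tail \<nu> (\<delta>*\<theta>) lam \<le> C_nu \<nu> * (\<delta>*\<theta>) powr (2*\<nu>) * inverse_square_sum"
    using assms by (intro g_tail_le) auto
  also have "\<dots> \<le> C_nu \<nu> * (\<Theta> powr (2*\<nu>) * \<delta> powr (2*\<nu>)) * inverse_square_sum"
    using \<open>(\<delta>*\<theta>) powr (2*\<nu>) \<le> _\<close> C_nu_pos[of \<nu>] assms(5) inverse_square_sum_nonneg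
    by (intro mult_right_mono mult_left_mono) auto
  finally show ?thesis by (simp add: mult_ac)
qed

lemma g_tail_le_g_star:
  assumes "\<bar>lam\<bar> \<le> pi" "0 < \<alpha>" "\<alpha> \<le> \<Theta>" "1/2 \<le> \<nu>"
  shows "g_tail \<nu> \<alpha> lam \<le> (\<Theta>\<^sup>2 + pi\<^sup>2) powr (\<nu> + 1/2) * inverse_square_sum * g_star \<nu> \<alpha> lam"
proof -
  have "lam\<^sup>2 \<le> pi\<^sup>2" using assms(1) abs_le_square_iff[of lam pi] by simp
  moreover have "\<alpha>\<^sup>2 \<le> \<Theta>\<^sup>2" using assms(2,3) by (intro power_mono) auto
  ultimately have "\<alpha>\<^sup>2 + lam\<^sup>2 \<le> \<Theta>\<^sup>2 + pi\<^sup>2" by simp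
  then have "(\<alpha>\<^sup>2 + lam\<^sup>2) powr (\<nu> + 1/2) \<le> (\<Theta>\<^sup>2 + pi\<^sup>2) powr (\<nu> + 1/2)"
    using assms by (intro powr_mono2) auto
  have "g_tail \<nu> \<alpha> lam \<le> C_nu \<nu> * \<alpha> powr (2*\<nu>) * inverse_square_sum"
    using assms by (intro g_tail_le) auto
  also have "\<dots> = g_star \<nu> \<alpha> lam * (\<alpha>\<^sup>2 + lam\<^sup>2) powr (\<nu> + 1/2) * inverse_square_sum"
    using C_nu_mult_powr_eq[OF assms(2)] by simp
  also have "\<dots> \<le> g_star \<nu> \<alpha> lam * (\<Theta>\<^sup>2 + pi\<^sup>2) powr (\<nu> + 1/2) * inverse_square_sum"
    using \<open>(\<alpha>\<^sup>2 + lam\<^sup>2) powr (\<nu> + 1/2) \<le> _\<close> g_star_nonneg[of \<nu>] assms(4) inverse_square_sum_nonneg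
    by (intro mult_right_mono mult_left_mono) auto
  finally show ?thesis by (simp add: mult_ac)
qed

lemma a_delta_le_uniform:
  fixes \<nu> B \<Theta> C :: real
  defines "C \<equiv> 2*pi*B * (C_nu \<nu> * \<Theta> powr (2*\<nu>) * inverse_square_sum + 1
                         + (\<Theta>\<^sup>2 + pi\<^sup>2) powr (\<nu> + 1/2) * inverse_square_sum)"
  assumes "\<bar>lam\<bar> \<le> pi" "0 < \<delta>" "\<delta> \<le> 1" "0 < b" "b \<le> B" "0 < \<theta>" "\<theta> \<le> \<Theta>" "1/2 \<le> \<nu>"
  shows "a_delta \<nu> \<delta> b \<theta> lam \<le> a_star \<nu> b (\<delta>*\<theta>) lam + C * \<delta> powr (2*\<nu>)"
    and "a_delta \<nu> \<delta> b \<theta> lam \<le> C * g_star \<nu> (\<delta>*\<theta>) lam"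
proof -
  define K1 where "K1 = C_nu \<nu> * \<Theta> powr (2*\<nu>) * inverse_square_sum"
  define K2 where "K2 = (\<Theta>\<^sup>2 + pi\<^sup>2) powr (\<nu> + 1/2) * inverse_square_sum"
  have K: "0 \<le> K1" "0 \<le> K2"
    unfolding K1_def K2_def using inverse_square_sum_nonneg C_nu_pos[of \<nu>] assms(9) by simp_all
  have "\<delta>*\<theta> \<le> 1*\<theta>" using assms(4,7) by (intro mult_right_mono) auto
  then have \<delta>\<theta>: "0 < \<delta>*\<theta>" "\<delta>*\<theta> \<le> \<Theta>" using assms(3,7,8) by (simp, linarith)
  have "2*pi*b * g_tail \<nu> (\<delta>*\<theta>) lam \<le> 2*pi*B * (K1 * \<delta> powr (2*\<nu>))"
    using g_tail_le_delta_powr[of lam \<delta> \<theta> \<Theta> \<nu>] g_tail_nonneg[of \<nu>] assms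
    unfolding K1_def by (intro mult_mono) auto
  also have "\<dots> \<le> 2*pi*B * ((K1 + 1 + K2) * \<delta> powr (2*\<nu>))"
    using K assms(5,6) by (intro mult_left_mono mult_right_mono) auto
  also have "\<dots> = C * \<delta> powr (2*\<nu>)"
    unfolding C_def K1_def K2_def by (simp add: mult_ac)
  finally show "a_delta \<nu> \<delta> b \<theta> lam \<le> a_star \<nu> b (\<delta>*\<theta>) lam + C * \<delta> powr (2*\<nu>)"
    using a_delta_bounds(2)[OF assms(2) \<delta>\<theta>(1) assms(9,5)] by linarith
  have "g_star \<nu> (\<delta>*\<theta>) lam + g_tail \<nu> (\<delta>*\<theta>) lam \<le> (1 + K2) * g_star \<nu> (\<delta>*\<theta>) lam"
    using g_tail_le_g_star[OF assms(2) \<delta>\<theta> assms(9)] unfolding K2_def by (simp add: distrib_right)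
  then have "2*pi*b * (g_star \<nu> (\<delta>*\<theta>) lam + g_tail \<nu> (\<delta>*\<theta>) lam)
      \<le> 2*pi*B * ((1 + K2) * g_star \<nu> (\<delta>*\<theta>) lam)"
    using g_star_nonneg[of \<nu>] g_tail_nonneg[of \<nu>] assms by (intro mult_mono) auto
  also have "\<dots> \<le> 2*pi*B * ((K1 + 1 + K2) * g_star \<nu> (\<delta>*\<theta>) lam)"
    using K assms(5,6,9) g_star_nonneg[of \<nu>] by (intro mult_left_mono mult_right_mono) auto
  also have "\<dots> = C * g_star \<nu> (\<delta>*\<theta>) lam"
    unfolding C_def K1_def K2_def by (simp add: mult_ac)
  finally show "a_delta \<nu> \<delta> b \<theta> lam \<le> C * g_star \<nu> (\<delta>*\<theta>) lam"
    using a_delta_bounds(3)[OF assms(2) \<delta>\<theta>(1) assms(9,5)] by linarith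
qed

theorem lemma5p2:
  fixes \<nu> b_lo b_hi th_lo th_hi :: real
  assumes "\<nu> \<ge> 1/2"
    and "0 < b_lo" "b_lo \<le> b_hi"
    and "0 < th_lo" "th_lo \<le> th_hi"
  shows "\<exists>C>0. \<forall>\<delta> b \<theta> lam. \<delta> \<in> {0<..1} \<longrightarrow> b \<in> {b_lo..b_hi} \<longrightarrow>
            \<theta> \<in> {th_lo..th_hi} \<longrightarrow> lam \<in> {-pi..pi} \<longrightarrow>
            a_star \<nu> b (\<delta>*\<theta>) lam \<le> a_delta \<nu> \<delta> b \<theta> lam \<and>
            a_delta \<nu> \<delta> b \<theta> lam \<le> a_star \<nu> b (\<delta>*\<theta>) lam + C * \<delta> powr (2*\<nu>) \<and>
            a_delta \<nu> \<delta> b \<theta> lam \<le> C * g_star \<nu> (\<delta>*\<theta>) lam"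
proof -
  define K1 where "K1 = C_nu \<nu> * th_hi powr (2*\<nu>) * inverse_square_sum"
  define K2 where "K2 = (th_hi\<^sup>2 + pi\<^sup>2) powr (\<nu> + 1/2) * inverse_square_sum"
  define C where "C = 2*pi*b_hi * (K1 + 1 + K2)"
  have "0 \<le> K1" "0 \<le> K2"
    unfolding K1_def K2_def using inverse_square_sum_nonneg C_nu_pos[of \<nu>] assms(1) by simp_all
  then have "0 < C" unfolding C_def using assms(2,3) by (intro mult_pos_pos) auto
  moreover have "a_star \<nu> b (\<delta>*\<theta>) lam \<le> a_delta \<nu> \<delta> b \<theta> lam \<and>
      a_delta \<nu> \<delta> b \<theta> lam \<le> a_star \<nu> b (\<delta>*\<theta>) lam + C * \<delta> powr (2*\<nu>) \<and>
      a_delta \<nu> \<delta> b \<theta> lam \<le> C * g_star \<nu> (\<delta>*\<theta>) lam"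
    if "\<delta> \<in> {0<..1}" "b \<in> {b_lo..b_hi}" "\<theta> \<in> {th_lo..th_hi}" "lam \<in> {-pi..pi}" for \<delta> b \<theta> lam
    using that assms a_delta_bounds(1)[of lam \<delta> \<theta> \<nu> b]
      a_delta_le_uniform[of lam \<delta> b b_hi \<theta> th_hi \<nu>] unfolding C_def K1_def K2_def by auto
  ultimately show ?thesis by blast
qed

end
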